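(* Let $X$ be a finite-dimensional simplicial complex and let $\Sigma$ be a maximal simplex of $\mathcal{N}(X)$. Then there is a vertex $x$ of $X$ with $\Sigma=\Sigma_x$. If moreover, for all vertices $a,b$ of $X$, $\Sigma_a\subseteq\Sigma_b$ implies $a=b$, then for every vertex $y$ of $X$, $\Sigma_y$ is a maximal simplex of $\mathcal{N}(X)$.
   Context: A maximal simplex of a simplicial complex $Y$ is a maximal collection of vertices of $Y$ such that every finite subset is a simplex of $Y$. $\mathcal{N}(X)$ is the nerve of the collection of maximal simplices of $X$: its vertices are the maximal simplices of $X$, and a finite set of them is a simplex iff their common intersection is non-empty. For a vertex $x$ of $X$, $\Sigma_x$ is the collection of maximal simplices of $X$ containing $x$. *)

theory Defs
  imports Main
begin

definition simplicial_complex :: "'a set \<Rightarrow> 'a set set \<Rightarrow> bool" where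
  "simplicial_complex V K \<longleftrightarrow>
     (\<forall>\<sigma>\<in>K. finite \<sigma> \<and> \<sigma> \<noteq> {} \<and> \<sigma> \<subseteq> V) \<and>
     (\<forall>v\<in>V. {v} \<in> K) \<and>
     (\<forall>\<sigma>\<in>K. \<forall>\<tau>. \<tau> \<subseteq> \<sigma> \<and> \<tau> \<noteq> {} \<longrightarrow> \<tau> \<in> K)"

definition finite_dimensional :: "'a set set \<Rightarrow> bool" where
  "finite_dimensional K \<longleftrightarrow> (\<exists>n::nat. \<forall>\<sigma>\<in>K. card \<sigma> \<le> n)"

definition full_set :: "'a set \<Rightarrow> 'a set set \<Rightarrow> 'a set \<Rightarrow> bool" where
  "full_set V K M \<longleftrightarrow> M \<subseteq> V \<and> (\<forall>\<tau>. finite \<tau> \<and> \<tau> \<noteq> {} \<and> \<tau> \<subseteq> M \<longrightarrow> \<tau> \<in> K)"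

definition maximal_simplex :: "'a set \<Rightarrow> 'a set set \<Rightarrow> 'a set \<Rightarrow> bool" where
  "maximal_simplex V K M \<longleftrightarrow> M \<noteq> {} \<and> full_set V K M \<and>
     (\<forall>M'. M \<subseteq> M' \<and> full_set V K M' \<longrightarrow> M' = M)"

definition nerve_vertices :: "'a set \<Rightarrow> 'a set set \<Rightarrow> 'a set set" where
  "nerve_vertices V K = {M. maximal_simplex V K M}"

definition nerve_simplices :: "'a set \<Rightarrow> 'a set set \<Rightarrow> 'a set set set" where
  "nerve_simplices V K = {F. finite F \<and> F \<noteq> {} \<and> F \<subseteq> nerve_vertices V K \<and> \<Inter>F \<noteq> {}}"

definition Sigma_at :: "'a set \<Rightarrow> 'a set set \<Rightarrow> 'a \<Rightarrow> 'a set set" where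
  "Sigma_at V K x = {M. maximal_simplex V K M \<and> x \<in> M}"

end

theory Submission
  imports Defs
begin

text \<open>In a finite-dimensional complex a full set of vertices cannot be infinite, since it would
  contain simplices of every size; so cardinality arguments work: every vertex lies in a maximal
  simplex, and maximal simplices are finite. A full set of the nerve is a family of finite sets
  whose finite subfamilies all intersect, hence the whole family has a common vertex \<open>x\<close>, that is,
  it lies inside \<open>\<Sigma>\<^sub>x\<close>, which is itself full. So a maximal simplex of the nerve equals some
  \<open>\<Sigma>\<^sub>x\<close>, and if \<open>x \<mapsto> \<Sigma>\<^sub>x\<close> reflects inclusion, no \<open>\<Sigma>\<^sub>y\<close> can be properly enlarged.\<close>

lemma full_set_finite_card_le:
  assumes "\<forall>\<sigma>\<in>K. card \<sigma> \<le> n" and "full_set V K M"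
  shows "finite M" and "card M \<le> n"
proof -
  show fin: "finite M"
  proof (rule ccontr)
    assume "infinite M"
    then obtain B where B: "finite B" "card B = Suc n" "B \<subseteq> M"
      using infinite_arbitrarily_large by blast
    then have "B \<in> K"
      using assms(2) unfolding full_set_def by fastforce
    with assms(1) B(2) show False by fastforce
  qed
  show "card M \<le> n"
  proof (cases "M = {}")
    case False
    with fin assms(2) have "M \<in> K" unfolding full_set_def by blast
    with assms(1) show ?thesis by blast
  qed simp
qed

lemma full_set_finite:
  assumes "finite_dimensional K" and "full_set V K M"
  shows "finite M"
  using assms full_set_finite_card_le(1) unfolding finite_dimensional_def by blast

lemma full_set_extends_to_maximal_simplex:
  assumes "finite_dimensional K" and "full_set V K M" and "M \<noteq> {}"
  obtains M' where "M \<subseteq> M'" and "maximal_simplex V K M'"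
proof -
  obtain n where n: "\<forall>\<sigma>\<in>K. card \<sigma> \<le> n"
    using assms(1) unfolding finite_dimensional_def by blast
  let ?P = "\<lambda>N. full_set V K N \<and> M \<subseteq> N"
  have "\<forall>N. ?P N \<longrightarrow> card N < Suc n"
    using full_set_finite_card_le(2)[OF n] less_Suc_eq_le by blast
  then obtain M' where M': "?P M'" and largest: "\<And>N. ?P N \<Longrightarrow> card N \<le> card M'"
    using ex_has_greatest_nat[of ?P M card "Suc n"] assms(2) by blast
  have "maximal_simplex V K M'"
    unfolding maximal_simplex_def
  proof (intro conjI allI impI)
    show "M' \<noteq> {}" and "full_set V K M'" using M' assms(3) by auto
  next
    fix N assume N: "M' \<subseteq> N \<and> full_set V K N"
    with M' largest have "card N \<le> card M'" by blast
    moreover have "finite N" using N full_set_finite[OF assms(1)] by blast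
    ultimately show "N = M'" using N card_seteq[of N M'] by simp
  qed
  with M' that show ?thesis by blast
qed

lemma Inter_nonempty_if_finite_subfamilies_intersect:
  assumes "M\<^sub>0 \<in> F" and "finite M\<^sub>0"
    and "\<And>G. finite G \<Longrightarrow> G \<noteq> {} \<Longrightarrow> G \<subseteq> F \<Longrightarrow> \<Inter>G \<noteq> {}"
  shows "\<Inter>F \<noteq> {}"
proof
  assume "\<Inter>F = {}"
  then have "\<forall>x\<in>M\<^sub>0. \<exists>M\<in>F. x \<notin> M" by blast
  then obtain avoid where avoid: "\<And>x. x \<in> M\<^sub>0 \<Longrightarrow> avoid x \<in> F \<and> x \<notin> avoid x"
    by metis
  let ?G = "insert M\<^sub>0 (avoid ` M\<^sub>0)"
  have "\<Inter>?G = {}" using avoid by blast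
  moreover have "finite ?G" and "?G \<subseteq> F" using assms(1,2) avoid by auto
  ultimately show False using assms(3) by blast
qed

lemma Sigma_at_full_set_nerve:
  "full_set (nerve_vertices V K) (nerve_simplices V K) (Sigma_at V K x)"
  unfolding full_set_def nerve_simplices_def nerve_vertices_def Sigma_at_def by blast

lemma Sigma_at_nonempty:
  assumes "simplicial_complex V K" and "finite_dimensional K" and "y \<in> V"
  shows "Sigma_at V K y \<noteq> {}"
proof -
  have "full_set V K {y}"
    using assms(1,3) unfolding simplicial_complex_def full_set_def
    by (metis subset_singletonD)
  then obtain M where "{y} \<subseteq> M" and "maximal_simplex V K M"
    using full_set_extends_to_maximal_simplex[OF assms(2)] by blast
  then show ?thesis unfolding Sigma_at_def by blast
qed

lemma full_set_nerve_subset_Sigma_at: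
  assumes "finite_dimensional K" and "S \<noteq> {}"
    and S: "full_set (nerve_vertices V K) (nerve_simplices V K) S"
  obtains x where "x \<in> V" and "S \<subseteq> Sigma_at V K x"
proof -
  have maximal: "maximal_simplex V K M" if "M \<in> S" for M
    using S that unfolding full_set_def nerve_vertices_def by blast
  obtain M\<^sub>0 where "M\<^sub>0 \<in> S" using assms(2) by blast
  have "full_set V K M\<^sub>0"
    using maximal[OF \<open>M\<^sub>0 \<in> S\<close>] unfolding maximal_simplex_def by blast
  then have "finite M\<^sub>0" and "M\<^sub>0 \<subseteq> V"
    using full_set_finite[OF assms(1)] by (auto simp: full_set_def)
  have intersect: "\<Inter>G \<noteq> {}" if "finite G" "G \<noteq> {}" "G \<subseteq> S" for G
    using S that unfolding full_set_def nerve_simplices_def by blast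
  obtain x where x: "x \<in> \<Inter>S"
    using Inter_nonempty_if_finite_subfamilies_intersect[OF \<open>M\<^sub>0 \<in> S\<close> \<open>finite M\<^sub>0\<close> intersect]
    by blast
  have "x \<in> V"
    using x \<open>M\<^sub>0 \<in> S\<close> \<open>M\<^sub>0 \<subseteq> V\<close> by blast
  moreover have "S \<subseteq> Sigma_at V K x"
    using x maximal unfolding Sigma_at_def by blast
  ultimately show ?thesis using that by blast
qed

theorem lemma3p4:
  fixes V :: "'a set" and K :: "'a set set" and \<Sigma> :: "'a set set"
  assumes "simplicial_complex V K"
    and "finite_dimensional K"
    and "maximal_simplex (nerve_vertices V K) (nerve_simplices V K) \<Sigma>"
  shows "(\<exists>x\<in>V. \<Sigma> = Sigma_at V K x) \<and>
         ((\<forall>a\<in>V. \<forall>b\<in>V. Sigma_at V K a \<subseteq> Sigma_at V K b \<longrightarrow> a = b) \<longrightarrow>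
          (\<forall>y\<in>V. maximal_simplex (nerve_vertices V K) (nerve_simplices V K) (Sigma_at V K y)))"
proof (intro conjI impI ballI)
  obtain x where "x \<in> V" and "\<Sigma> \<subseteq> Sigma_at V K x"
    using assms(3) full_set_nerve_subset_Sigma_at[OF assms(2)]
    unfolding maximal_simplex_def by metis
  with assms(3) show "\<exists>x\<in>V. \<Sigma> = Sigma_at V K x"
    using Sigma_at_full_set_nerve unfolding maximal_simplex_def by metis
next
  fix y assume inj: "\<forall>a\<in>V. \<forall>b\<in>V. Sigma_at V K a \<subseteq> Sigma_at V K b \<longrightarrow> a = b"
    and "y \<in> V"
  note nonempty = Sigma_at_nonempty[OF assms(1,2) \<open>y \<in> V\<close>]
  show "maximal_simplex (nerve_vertices V K) (nerve_simplices V K) (Sigma_at V K y)"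
    unfolding maximal_simplex_def
  proof (intro conjI allI impI nonempty Sigma_at_full_set_nerve)
    fix S assume S: "Sigma_at V K y \<subseteq> S \<and> full_set (nerve_vertices V K) (nerve_simplices V K) S"
    then obtain x where "x \<in> V" and "S \<subseteq> Sigma_at V K x"
      using nonempty full_set_nerve_subset_Sigma_at[OF assms(2)] by blast
    with S inj \<open>y \<in> V\<close> show "S = Sigma_at V K y" by blast
  qed
qed

end
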